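(* There exists a random coverage collaborative learning problem with strategy space $\Theta=\mathbb{R}_+^k$ whose set of stable equilibria is non-convex.
   Context: Random coverage: finite domain $\mathcal{X}$; agent $i$ has a distribution $(q_{ix})_{x\in\mathcal{X}}$ on $\mathcal{X}$. For integer sample counts ${\bf m}$, $U_i({\bf m})=1-\frac12\sum_{x\in\mathcal{X}}q_{ix}\prod_{j=1}^k(1-q_{jx})^{m_j}$; for real ${\boldsymbol\theta}\in\mathbb{R}_+^k$, $u_i({\boldsymbol\theta})=\mathbb{E}[U_i({\bf m})]$ where the $m_j$ are independent with $m_j=\lfloor\theta_j\rfloor+\mathrm{Bernoulli}(\theta_j-\lfloor\theta_j\rfloor)$. Each agent has a threshold $\mu_i$; ${\boldsymbol\theta}$ is feasible if $u_i({\boldsymbol\theta})\ge\mu_i$ for all $i$. A feasible ${\boldsymbol\theta}$ is a stable equilibrium if for no $i$ is there $0\le\theta_i'<\theta_i$ with $u_i(\theta_i',{\boldsymbol\theta}_{-i})\ge\mu_i$ (${\boldsymbol\theta}$ with $i$-th entry replaced by $\theta_i'$). *)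

theory Defs
  imports "HOL-Analysis.Analysis" "HOL-Library.FuncSet"
begin

(* Agents: 0..<k.
   q i x: probability of point x under agent i's distribution.
   Strategies theta :: nat => real, meaningful on 0..<k (zero elsewhere). *)

definition rc_dist :: "nat set \<Rightarrow> nat \<Rightarrow> (nat \<Rightarrow> nat \<Rightarrow> real) \<Rightarrow> bool" where
  "rc_dist X k q \<longleftrightarrow> finite X \<and>
     (\<forall>i<k. (\<forall>x\<in>X. q i x \<ge> 0) \<and> (\<Sum>x\<in>X. q i x) = 1)"

definition rc_U :: "nat set \<Rightarrow> nat \<Rightarrow> (nat \<Rightarrow> nat \<Rightarrow> real) \<Rightarrow> nat \<Rightarrow> (nat \<Rightarrow> nat) \<Rightarrow> real" where
  "rc_U X k q i m = 1 - (1/2) * (\<Sum>x\<in>X. q i x * (\<Prod>j<k. (1 - q j x) ^ (m j)))"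

(* u_i(theta) = E[U_i(m)], m_j = floor theta_j + Bernoulli(frac theta_j), independent;
   the expectation is written out as a finite sum over the 2^k outcomes b of the Bernoullis *)
definition rc_u :: "nat set \<Rightarrow> nat \<Rightarrow> (nat \<Rightarrow> nat \<Rightarrow> real) \<Rightarrow> nat \<Rightarrow> (nat \<Rightarrow> real) \<Rightarrow> real" where
  "rc_u X k q i \<theta> =
     (\<Sum>b\<in>PiE {..<k} (\<lambda>_. {0::nat, 1}).
        (\<Prod>j<k. if b j = 1 then frac (\<theta> j) else 1 - frac (\<theta> j))
        * rc_U X k q i (\<lambda>j. nat \<lfloor>\<theta> j\<rfloor> + b j))"

definition rc_strat :: "nat \<Rightarrow> (nat \<Rightarrow> real) set" where
  "rc_strat k = {\<theta>. (\<forall>j<k. \<theta> j \<ge> 0) \<and> (\<forall>j\<ge>k. \<theta> j = 0)}"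

definition rc_feasible :: "nat set \<Rightarrow> nat \<Rightarrow> (nat \<Rightarrow> nat \<Rightarrow> real) \<Rightarrow> (nat \<Rightarrow> real) \<Rightarrow> (nat \<Rightarrow> real) \<Rightarrow> bool" where
  "rc_feasible X k q \<mu> \<theta> \<longleftrightarrow> \<theta> \<in> rc_strat k \<and> (\<forall>i<k. rc_u X k q i \<theta> \<ge> \<mu> i)"

definition rc_stable :: "nat set \<Rightarrow> nat \<Rightarrow> (nat \<Rightarrow> nat \<Rightarrow> real) \<Rightarrow> (nat \<Rightarrow> real) \<Rightarrow> (nat \<Rightarrow> real) \<Rightarrow> bool" where
  "rc_stable X k q \<mu> \<theta> \<longleftrightarrow> rc_feasible X k q \<mu> \<theta> \<and>
     \<not> (\<exists>i<k. \<exists>t. 0 \<le> t \<and> t < \<theta> i \<and> rc_u X k q i (\<theta>(i := t)) \<ge> \<mu> i)"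

definition convex_strats :: "(nat \<Rightarrow> real) set \<Rightarrow> bool" where
  "convex_strats S \<longleftrightarrow> (\<forall>a\<in>S. \<forall>b\<in>S. \<forall>t::real. 0 \<le> t \<and> t \<le> 1 \<longrightarrow>
      (\<lambda>j. (1 - t) * a j + t * b j) \<in> S)"

end

theory Submission
  imports Defs
begin

text \<open>Since the roundings \<open>m\<^sub>j\<close> are independent, \<open>u\<^sub>i\<close> factors through the
moments \<open>expected_power c \<theta>\<^sub>j = E[c^m\<^sub>j]\<close>. Take a single point that every agent draws
with probability one. Then \<open>u\<^sub>i(\<theta>) = 1 - \<Prod>\<^sub>j max 0 (1 - \<theta>\<^sub>j) / 2\<close>, so with thresholds
\<open>\<mu>\<^sub>i = 1\<close> and two agents both unit vectors are stable equilibria, while their midpoint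
has utility \<open>7/8\<close> and is not even feasible.\<close>

definition expected_power :: "real \<Rightarrow> real \<Rightarrow> real" where
  "expected_power c t = (1 - frac t) * c ^ nat \<lfloor>t\<rfloor> + frac t * c ^ (nat \<lfloor>t\<rfloor> + 1)"

lemma rc_u_eq_expected_power:
  "rc_u X k q i \<theta> = 1 - 1/2 * (\<Sum>x\<in>X. q i x * (\<Prod>j<k. expected_power (1 - q j x) (\<theta> j)))"
proof -
  define B where "B = PiE {..<k} (\<lambda>_. {0::nat, 1})"
  define p :: "nat \<Rightarrow> nat \<Rightarrow> real"
    where "p j \<beta> = (if \<beta> = 1 then frac (\<theta> j) else 1 - frac (\<theta> j))" for j \<beta>
  define w :: "(nat \<Rightarrow> nat) \<Rightarrow> real"
    where "w b = (\<Prod>j<k. p j (b j))" for b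
  have weights: "(\<Sum>b\<in>B. w b) = 1"
  proof -
    have "(\<Sum>b\<in>B. w b) = (\<Prod>j<k. \<Sum>\<beta>\<in>{0,1}. p j \<beta>)"
      unfolding B_def w_def by (rule prod_sum_PiE[symmetric]) simp_all
    also have "\<dots> = 1" by (simp add: p_def)
    finally show ?thesis .
  qed
  have moments: "(\<Sum>b\<in>B. w b * (\<Prod>j<k. c j ^ (nat \<lfloor>\<theta> j\<rfloor> + b j)))
      = (\<Prod>j<k. expected_power (c j) (\<theta> j))" for c
  proof -
    have "(\<Sum>b\<in>B. w b * (\<Prod>j<k. c j ^ (nat \<lfloor>\<theta> j\<rfloor> + b j)))
        = (\<Sum>b\<in>B. \<Prod>j<k. p j (b j) * c j ^ (nat \<lfloor>\<theta> j\<rfloor> + b j))"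
      unfolding w_def by (simp add: prod.distrib)
    also have "\<dots> = (\<Prod>j<k. \<Sum>\<beta>\<in>{0,1}. p j \<beta> * c j ^ (nat \<lfloor>\<theta> j\<rfloor> + \<beta>))"
      unfolding B_def by (rule prod_sum_PiE[symmetric]) simp_all
    also have "\<dots> = (\<Prod>j<k. expected_power (c j) (\<theta> j))"
      by (simp add: p_def expected_power_def)
    finally show ?thesis .
  qed
  have "rc_u X k q i \<theta>
      = (\<Sum>b\<in>B. w b * (1 - 1/2 * (\<Sum>x\<in>X. q i x * (\<Prod>j<k. (1 - q j x) ^ (nat \<lfloor>\<theta> j\<rfloor> + b j)))))"
    unfolding rc_u_def rc_U_def B_def w_def p_def ..
  also have "\<dots> = (\<Sum>b\<in>B. w b)
      - 1/2 * (\<Sum>x\<in>X. q i x * (\<Sum>b\<in>B. w b * (\<Prod>j<k. (1 - q j x) ^ (nat \<lfloor>\<theta> j\<rfloor> + b j))))"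
    by (simp add: algebra_simps sum_subtractf sum_distrib_left sum_distrib_right sum.swap[of _ B X])
  finally show ?thesis by (simp add: weights moments)
qed

lemma expected_power_zero_base:
  assumes "0 \<le> t"
  shows "expected_power 0 t = max 0 (1 - t)"
proof (cases "t < 1")
  case True
  then have "\<lfloor>t\<rfloor> = 0" "frac t = t" using assms by (simp_all add: floor_eq_iff frac_eq)
  then show ?thesis using True by (simp add: expected_power_def)
next
  case False
  then have "nat \<lfloor>t\<rfloor> \<noteq> 0" by linarith
  then show ?thesis using False by (simp add: expected_power_def)
qed

lemma rc_u_single_point:
  assumes "0 \<le> \<theta> 0" "0 \<le> \<theta> 1"
  shows "rc_u {0} 2 (\<lambda>_ _. 1) i \<theta> = 1 - max 0 (1 - \<theta> 0) * max 0 (1 - \<theta> 1) / 2"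
  using assms by (simp add: rc_u_eq_expected_power expected_power_zero_base numeral_2_eq_2)

lemma rc_stable_single_point_unit:
  assumes "j < 2"
  shows "rc_stable {0} 2 (\<lambda>_ _. 1) (\<lambda>_. 1) (\<lambda>l. if l = j then 1 else 0)"
  unfolding rc_stable_def rc_feasible_def rc_strat_def
proof (intro conjI allI impI notI CollectI)
  let ?e = "\<lambda>l::nat. if l = j then 1 else 0 :: real"
  show "rc_u {0} 2 (\<lambda>_ _. 1) i ?e \<ge> 1" for i
    using assms by (auto simp: rc_u_single_point less_2_cases_iff)
  assume "\<exists>i<2. \<exists>t. 0 \<le> t \<and> t < ?e i \<and> 1 \<le> rc_u {0} 2 (\<lambda>_ _. 1) i (?e(i := t))"
  then obtain i t where "i < 2" "0 \<le> t" "t < ?e i" "1 \<le> rc_u {0} 2 (\<lambda>_ _. 1) i (?e(i := t))"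
    by blast
  then show False
    using assms by (auto simp: rc_u_single_point less_2_cases_iff split: if_splits)
qed (use assms in auto)

lemma not_rc_feasible_single_point_midpoint:
  "\<not> rc_feasible {0} 2 (\<lambda>_ _. 1) (\<lambda>_. 1) (\<lambda>l. if l < 2 then 1/2 else 0)"
  by (auto simp: rc_feasible_def rc_u_single_point intro!: exI[of _ 0])

theorem theorem8:
  shows "\<exists>(X::nat set) (k::nat) (q::nat \<Rightarrow> nat \<Rightarrow> real) (\<mu>::nat \<Rightarrow> real).
           rc_dist X k q \<and> \<not> convex_strats {\<theta>. rc_stable X k q \<mu> \<theta>}"
proof (intro exI conjI notI)
  show "rc_dist {0} 2 (\<lambda>_ _. 1)" by (simp add: rc_dist_def)
  assume convex: "convex_strats {\<theta>. rc_stable {0} 2 (\<lambda>_ _. 1) (\<lambda>_. 1) \<theta>}"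
  let ?e = "\<lambda>j l::nat. if l = j then 1 else 0 :: real"
  have "(\<lambda>l. (1 - 1/2) * ?e 0 l + 1/2 * ?e 1 l) \<in> {\<theta>. rc_stable {0} 2 (\<lambda>_ _. 1) (\<lambda>_. 1) \<theta>}"
    by (rule convex[unfolded convex_strats_def, rule_format])
      (simp_all add: rc_stable_single_point_unit)
  moreover have "(\<lambda>l. (1 - 1/2) * ?e 0 l + 1/2 * ?e 1 l) = (\<lambda>l. if l < 2 then 1/2 else 0)"
    by (auto simp: less_2_cases_iff)
  ultimately show False
    using not_rc_feasible_single_point_midpoint by (simp add: rc_stable_def)
qed

end
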